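(* Let $\mathcal{A}$ be a nontrivial abelian group. Let $M_{11}(p_1,p_2)$ be the graph consisting of the $5$-cycle $v_1v_2v_3v_4v_5v_1$ and the triangle $v_1v_6v_7$ (sharing the vertex $v_1$), together with $p_1\ge0$ pendant vertices adjacent to $v_1$ and $p_2\ge 0$ pendant vertices adjacent to $v_2$. Then $M_{11}(p_1,p_2)$ is $\mathcal{A}$-vertex magic if and only if $p_1=p_2=0$. Further, $M_{11}(0,0)$ is group vertex magic.
   Context: A map $\ell:V(G)\to\mathcal{A}\setminus\{0\}$ is an $\mathcal{A}$-vertex magic labeling if there is $\mu\in\mathcal{A}$ with $\sum_{u\in N(v)}\ell(u)=\mu$ for every vertex $v$; $G$ is $\mathcal{A}$-vertex magic if such a labeling exists, and group vertex magic if it is $\mathcal{A}$-vertex magic for every nontrivial abelian group $\mathcal{A}$. A pendant vertex has degree $1$. *)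

theory Defs
  imports Main
begin

definition nbhd :: "'v set \<Rightarrow> ('v \<Rightarrow> 'v \<Rightarrow> bool) \<Rightarrow> 'v \<Rightarrow> 'v set" where
  "nbhd V E v = {u \<in> V. E v u}"

definition is_A_vertex_magic_labeling ::
  "'v set \<Rightarrow> ('v \<Rightarrow> 'v \<Rightarrow> bool) \<Rightarrow> ('v \<Rightarrow> 'a::ab_group_add) \<Rightarrow> bool" where
  "is_A_vertex_magic_labeling V E l \<longleftrightarrow>
     (\<forall>v\<in>V. l v \<noteq> 0) \<and> (\<exists>\<mu>. \<forall>v\<in>V. (\<Sum>u\<in>nbhd V E v. l u) = \<mu>)"

definition A_vertex_magic ::
  "'a::ab_group_add itself \<Rightarrow> 'v set \<Rightarrow> ('v \<Rightarrow> 'v \<Rightarrow> bool) \<Rightarrow> bool" where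
  "A_vertex_magic _ V E \<longleftrightarrow> (\<exists>l :: 'v \<Rightarrow> 'a. is_A_vertex_magic_labeling V E l)"

text \<open>The graph M11(p1,p2) on vertices {1..7+p1+p2}: 5-cycle 1-2-3-4-5-1,
triangle 1-6-7, pendant vertices 8..7+p1 attached to vertex 1 and
pendant vertices 8+p1..7+p1+p2 attached to vertex 2.\<close>

definition M11_V :: "nat \<Rightarrow> nat \<Rightarrow> nat set" where
  "M11_V p1 p2 = {1..7 + p1 + p2}"

definition M11_dir :: "nat \<Rightarrow> nat \<Rightarrow> nat \<Rightarrow> nat \<Rightarrow> bool" where
  "M11_dir p1 p2 u v \<longleftrightarrow>
     (u, v) \<in> {(1,2),(2,3),(3,4),(4,5),(5,1),(1,6),(6,7),(7,1)}
     \<or> (u = 1 \<and> 8 \<le> v \<and> v \<le> 7 + p1)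
     \<or> (u = 2 \<and> 8 + p1 \<le> v \<and> v \<le> 7 + p1 + p2)"

definition M11_E :: "nat \<Rightarrow> nat \<Rightarrow> nat \<Rightarrow> nat \<Rightarrow> bool" where
  "M11_E p1 p2 u v \<longleftrightarrow> M11_dir p1 p2 u v \<or> M11_dir p1 p2 v u"

end

theory Submission
  imports Defs
begin

text \<open>In a magic labeling with magic constant \<mu>, a pendant vertex forces the label of
its neighbour w to be \<mu>. A vertex whose only neighbours are w and x then forces l x = 0.
In M11 the vertex 6 has neighbourhood {1, 7} and the vertex 3 has neighbourhood {2, 4},
so there can be no pendants at 1 or at 2. Conversely, labeling 1, 2, 5 by a and 3, 4, 6, 7
by -a gives every neighbourhood sum 0 in M11(0,0).\<close>

lemma not_magic_pendant_and_degree_two_share_neighbour: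
  assumes "is_A_vertex_magic_labeling V E l"
    and "p \<in> V" "nbhd V E p = {w}"
    and "v \<in> V" "nbhd V E v = {w, x}" "w \<noteq> x"
  shows False
proof -
  from assms(1) obtain \<mu> where nonzero: "\<forall>u\<in>V. l u \<noteq> 0"
    and sums: "\<forall>u\<in>V. (\<Sum>y\<in>nbhd V E u. l y) = \<mu>"
    unfolding is_A_vertex_magic_labeling_def by blast
  have "l w = \<mu>" using sums assms(2,3) by auto
  moreover have "l w + l x = \<mu>" using sums assms(4-6) by auto
  ultimately have "l x = 0" by simp
  moreover have "x \<in> V" using assms(5) by (auto simp: nbhd_def)
  ultimately show False using nonzero by blast
qed

lemma nbhd_M11_degree_two:
  "nbhd (M11_V p1 p2) (M11_E p1 p2) 6 = {1, 7}"
  "nbhd (M11_V p1 p2) (M11_E p1 p2) 3 = {2, 4}"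
  by (auto simp: nbhd_def M11_V_def M11_E_def M11_dir_def)

lemma nbhd_M11_pendant:
  "p1 > 0 \<Longrightarrow> nbhd (M11_V p1 p2) (M11_E p1 p2) 8 = {1}"
  "p2 > 0 \<Longrightarrow> nbhd (M11_V p1 p2) (M11_E p1 p2) (8 + p1) = {2}"
  by (auto simp: nbhd_def M11_V_def M11_E_def M11_dir_def)

lemma M11_vertex_magic_imp_no_pendants:
  assumes "A_vertex_magic TYPE('a::ab_group_add) (M11_V p1 p2) (M11_E p1 p2)"
  shows "p1 = 0 \<and> p2 = 0"
proof -
  from assms obtain l :: "nat \<Rightarrow> 'a" where l: "is_A_vertex_magic_labeling (M11_V p1 p2) (M11_E p1 p2) l"
    unfolding A_vertex_magic_def by blast
  have "p1 = 0"
  proof (rule ccontr)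
    assume "p1 \<noteq> 0"
    then have "8 \<in> M11_V p1 p2" "6 \<in> M11_V p1 p2" by (auto simp: M11_V_def)
    with \<open>p1 \<noteq> 0\<close> show False
      using not_magic_pendant_and_degree_two_share_neighbour[OF l _ nbhd_M11_pendant(1) _ nbhd_M11_degree_two(1)]
      by simp
  qed
  moreover have "p2 = 0"
  proof (rule ccontr)
    assume "p2 \<noteq> 0"
    then have "8 + p1 \<in> M11_V p1 p2" "3 \<in> M11_V p1 p2" by (auto simp: M11_V_def)
    with \<open>p2 \<noteq> 0\<close> show False
      using not_magic_pendant_and_degree_two_share_neighbour[OF l _ nbhd_M11_pendant(2) _ nbhd_M11_degree_two(2)]
      by simp
  qed
  ultimately show ?thesis ..
qed

lemma M11_V_0_0: "M11_V 0 0 = {1, 2, 3, 4, 5, 6, 7}"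
  by (auto simp: M11_V_def)

lemma nbhd_M11_0_0:
  "nbhd (M11_V 0 0) (M11_E 0 0) 1 = {2, 5, 6, 7}"
  "nbhd (M11_V 0 0) (M11_E 0 0) 2 = {1, 3}"
  "nbhd (M11_V 0 0) (M11_E 0 0) 3 = {2, 4}"
  "nbhd (M11_V 0 0) (M11_E 0 0) 4 = {3, 5}"
  "nbhd (M11_V 0 0) (M11_E 0 0) 5 = {1, 4}"
  "nbhd (M11_V 0 0) (M11_E 0 0) 6 = {1, 7}"
  "nbhd (M11_V 0 0) (M11_E 0 0) 7 = {1, 6}"
  by (auto simp: nbhd_def M11_V_def M11_E_def M11_dir_def)

lemma M11_0_0_vertex_magic:
  assumes "(a :: 'a::ab_group_add) \<noteq> 0"
  shows "A_vertex_magic TYPE('a) (M11_V 0 0) (M11_E 0 0)"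
proof -
  define l where "l = (\<lambda>v::nat. if v \<in> {1, 2, 5} then a else - a)"
  have "is_A_vertex_magic_labeling (M11_V 0 0) (M11_E 0 0) l"
    unfolding is_A_vertex_magic_labeling_def
  proof (intro conjI exI[of _ 0] ballI)
    fix v assume "v \<in> M11_V 0 0"
    then have v: "v \<in> {1, 2, 3, 4, 5, 6, 7}" by (simp only: M11_V_0_0)
    then show "l v \<noteq> 0" using assms by (auto simp: l_def)
    from v show "(\<Sum>u\<in>nbhd (M11_V 0 0) (M11_E 0 0) v. l u) = 0"
      by (elim insertE emptyE) (simp_all add: nbhd_M11_0_0 nbhd_M11_0_0(1)[unfolded One_nat_def] l_def)
  qed
  then show ?thesis unfolding A_vertex_magic_def by blast
qed

theorem proposition4p13:
  fixes p1 p2 :: nat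
  assumes "\<exists>x :: 'a::ab_group_add. x \<noteq> 0"
  shows "(A_vertex_magic TYPE('a) (M11_V p1 p2) (M11_E p1 p2) \<longleftrightarrow> p1 = 0 \<and> p2 = 0)
     \<and> ((\<exists>y :: 'b::ab_group_add. y \<noteq> 0) \<longrightarrow> A_vertex_magic TYPE('b) (M11_V 0 0) (M11_E 0 0))"
proof (rule conjI)
  show "A_vertex_magic TYPE('a) (M11_V p1 p2) (M11_E p1 p2) \<longleftrightarrow> p1 = 0 \<and> p2 = 0"
    using assms M11_vertex_magic_imp_no_pendants M11_0_0_vertex_magic by blast
  show "(\<exists>y :: 'b. y \<noteq> 0) \<longrightarrow> A_vertex_magic TYPE('b) (M11_V 0 0) (M11_E 0 0)"
    using M11_0_0_vertex_magic by blast
qed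

end
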